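(* Let $y,l,u\in\mathcal{R}(\mathbb{R}^{+},\mathbb{R})$ be such that $l\leq u$ and $l_0\leq y_0\leq u_0$. Let $(\xi,\kappa)$ be the solution of $RP_l(y)$. Then for all $t\geq0$, $$\alpha^{l}(y)_t\vee\beta^{u}_{l}(y)_t=\alpha^{l}(y)_t+\Theta^u_l(\xi)_t.$$
   Context: A function $f:\mathbb{R}^+=[0,\infty)\to\mathbb{R}$ is regulated if it has a left limit $f_{t^-}$ at every $t>0$ and a right limit $f_{t^+}$ at every $t\geq0$; $\mathcal{R}(\mathbb{R}^{+},\mathbb{R})$ is the set of regulated functions. $a\wedge b=\min(a,b)$, $a\vee b=\max(a,b)$, $a^+=a\vee0$. Maps: $\alpha^{l}(y)_t=\inf_{s\leq t}\big((y_s-l_s)\wedge(y_{s^+}-l_{s^+})\wedge 0\big)$; $\beta^{u}_{l}(y)_t=\sup_{s\leq t}\Big(\big((y_s-u_s)\vee(y_{s^+}-u_{s^+})\big)\wedge\inf_{s\leq r\leq t}\big[\big((y_r-l_r)\wedge(y_{r^+}-l_{r^+})\big)\vee(y_r-u_r)\big]\Big)$; $\Theta^{u}_{l}(f)_t=\sup_{s\leq t}\Big(\big((f_s-u_s)\vee(f_{s^+}-u_{s^+})\big)^+\wedge\inf_{s\leq r\leq t}\big[\big((f_r-l_r)\wedge(f_{r^+}-l_{r^+})\big)\vee(f_r-u_r)\big]\Big)$. One-barrier problem $RP_l(y)$ (for $y,l$ regulated with $y_0\geq l_0$): the unique pair $(\xi,\kappa)$ with $\xi=y+\kappa\geq l$,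 $\kappa$ non-decreasing, right-continuous, $\kappa_0=0$, and $\int_{[0,\infty[}(\xi_s-l_s)\wedge(\xi_{s^+}-l_{s^+})\,d\kappa_s=0$; explicitly $\kappa=-\alpha^l(y)$. *)

theory Defs
  imports "HOL-Analysis.Analysis"
begin

text \<open>Functions on R+ = [0,inf) are modelled as real => real; values at negative
arguments are irrelevant (every notion below only looks at t >= 0).\<close>

definition regulated :: "(real \<Rightarrow> real) \<Rightarrow> bool" where
  "regulated f \<longleftrightarrow>
     (\<forall>t>0. \<exists>L. (f \<longlongrightarrow> L) (at_left t)) \<and>
     (\<forall>t\<ge>0. \<exists>L. (f \<longlongrightarrow> L) (at_right t))"

definition rlim :: "(real \<Rightarrow> real) \<Rightarrow> real \<Rightarrow> real" where
  "rlim f t = Lim (at_right t) f"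

definition alpha :: "(real \<Rightarrow> real) \<Rightarrow> (real \<Rightarrow> real) \<Rightarrow> real \<Rightarrow> real" where
  "alpha l y t = (INF s\<in>{0..t}. min (min (y s - l s) (rlim y s - rlim l s)) 0)"

definition beta :: "(real \<Rightarrow> real) \<Rightarrow> (real \<Rightarrow> real) \<Rightarrow> (real \<Rightarrow> real) \<Rightarrow> real \<Rightarrow> real" where
  "beta u l y t = (SUP s\<in>{0..t}.
      min (max (y s - u s) (rlim y s - rlim u s))
          (INF r\<in>{s..t}. max (min (y r - l r) (rlim y r - rlim l r)) (y r - u r)))"

definition Theta :: "(real \<Rightarrow> real) \<Rightarrow> (real \<Rightarrow> real) \<Rightarrow> (real \<Rightarrow> real) \<Rightarrow> real \<Rightarrow> real" where
  "Theta u l f t = (SUP s\<in>{0..t}.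
      min (max (max (f s - u s) (rlim f s - rlim u s)) 0)
          (INF r\<in>{s..t}. max (min (f r - l r) (rlim f r - rlim l r)) (f r - u r)))"

text \<open>The Stieltjes
integral d kappa over [0,inf) is taken w.r.t. the Lebesgue-Stieltjes measure of
kappa extended by kappa(0)=0 to the negative half-line (no atom at 0, as kappa_0 = 0).
The integrand is nonnegative since xi >= l, so a nonnegative integral is used.\<close>
definition RP_sol :: "(real \<Rightarrow> real) \<Rightarrow> (real \<Rightarrow> real) \<Rightarrow> (real \<Rightarrow> real) \<Rightarrow> (real \<Rightarrow> real) \<Rightarrow> bool" where
  "RP_sol l y xi kappa \<longleftrightarrow>
     (\<forall>t\<ge>0. xi t = y t + kappa t) \<and>
     (\<forall>t\<ge>0. xi t \<ge> l t) \<and>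
     mono_on {0..} kappa \<and>
     (\<forall>t\<ge>0. continuous (at_right t) kappa) \<and>
     kappa 0 = 0 \<and>
     (\<integral>\<^sup>+ s. ennreal (min (xi s - l s) (rlim xi s - rlim l s)) * indicator {0..} s
        \<partial>interval_measure (\<lambda>x. kappa (max x 0))) = 0"

end

theory Submission
  imports Defs
begin

text \<open>Write f+ for the right limit rlim f and put c = min (y - l) (y+ - l+),
  a = max c (y - u) and b = max (y - u) (y+ - u+). Substituting \<xi> = y + \<kappa> turns the
  corresponding quantities for \<xi> into c + \<kappa>, a + \<kappa> and b + \<kappa>, so \<beta>(y) and \<Theta>(\<xi>) are
  the same sup-inf functional, once of (b, a) and once of (max (b + \<kappa>) 0, a + \<kappa>).
  Read through the Lebesgue-Stieltjes measure of \<kappa>, the complementarity condition says that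
  \<kappa> only grows at times where c + \<kappa> is nearly zero; at such times a is attained by y - u
  and is therefore bounded by b. This is what lets the nondecreasing shift \<kappa> be pulled out
  of the sup-inf: \<Theta>(\<xi>)_t = max 0 (\<beta>(y)_t + \<kappa>_t). The same growth property gives
  \<alpha>(y)_t = -\<kappa>_t, and the identity follows.\<close>

lemma Inter_Ioc_shrinking_eq_Icc:
  fixes a b :: real
  shows "(\<Inter>n. {a - 1 / real (Suc n)<..b}) = {a..b}"
proof (intro set_eqI iffI)
  fix x assume x: "x \<in> (\<Inter>n. {a - 1 / real (Suc n)<..b})"
  have "a \<le> x"
  proof (rule ccontr)
    assume "\<not> a \<le> x"
    then obtain n where "1 / real (Suc n) < a - x"
      using reals_Archimedean[of "a - x"] by (auto simp: inverse_eq_divide)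
    moreover have "a - 1 / real (Suc n) < x" using x by auto
    ultimately show False by linarith
  qed
  with x show "x \<in> {a..b}" by auto
next
  fix x assume "x \<in> {a..b}"
  then show "x \<in> (\<Inter>n. {a - 1 / real (Suc n)<..b})"
    by (auto simp: less_le_trans[of _ a x])
qed

lemma decseq_Ioc_shrinking:
  fixes a b :: real
  shows "decseq (\<lambda>n. {a - 1 / real (Suc n)<..b})"
proof (rule decseq_SucI, rule subsetI)
  fix n x assume "x \<in> {a - 1 / real (Suc (Suc n))<..b}"
  moreover have "1 / real (Suc (Suc n)) \<le> 1 / real (Suc n)" by (rule divide_left_mono) auto
  ultimately show "x \<in> {a - 1 / real (Suc n)<..b}" by auto
qed

lemma emeasure_interval_measure_Icc_ge:
  fixes F :: "real \<Rightarrow> real"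
  assumes mono_F: "mono F" and right_cont_F: "\<And>x. continuous (at_right x) F"
    and "a \<le> b" and below: "\<And>x. x < a \<Longrightarrow> F x \<le> c"
  shows "ennreal (F b - c) \<le> emeasure (interval_measure F) {a..b}"
proof -
  define A where "A n = {a - 1 / real (Suc n)<..b}" for n
  have emeasure_A: "emeasure (interval_measure F) (A n) = ennreal (F b - F (a - 1 / real (Suc n)))"
    for n
    unfolding A_def using \<open>a \<le> b\<close> mono_F right_cont_F
    by (intro emeasure_interval_measure_Ioc) (auto simp: mono_def intro: order_trans[OF _ \<open>a \<le> b\<close>])
  have "decseq A" unfolding A_def by (rule decseq_Ioc_shrinking)
  have "range A \<subseteq> sets (interval_measure F)" by (auto simp: A_def)
  have "ennreal (F b - c) \<le> (INF n. emeasure (interval_measure F) (A n))"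
    unfolding emeasure_A using below by (intro INF_greatest ennreal_leI) simp
  also have "\<dots> = emeasure (interval_measure F) (\<Inter>n. A n)"
    using \<open>range A \<subseteq> _\<close> \<open>decseq A\<close> by (rule INF_emeasure_decseq) (simp add: emeasure_A)
  also have "(\<Inter>n. A n) = {a..b}"
    unfolding A_def by (rule Inter_Ioc_shrinking_eq_Icc)
  finally show ?thesis .
qed

lemma mono_right_continuous_first_crossing:
  fixes F :: "real \<Rightarrow> real"
  assumes mono_F: "mono F" and right_cont_F: "\<And>x. continuous (at_right x) F"
    and "F s < \<theta>" and "\<theta> \<le> F t"
  obtains \<sigma> where "s \<le> \<sigma>" and "\<sigma> \<le> t"
    and "\<And>x. x < \<sigma> \<Longrightarrow> F x < \<theta>" and "\<And>x. \<sigma> \<le> x \<Longrightarrow> \<theta> \<le> F x"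
proof
  define D where "D = {r. \<theta> \<le> F r}"
  define \<sigma> where "\<sigma> = Inf D"
  have "t \<in> D" using \<open>\<theta> \<le> F t\<close> by (simp add: D_def)
  have D_ge_s: "s \<le> r" if "r \<in> D" for r
  proof (rule ccontr)
    assume "\<not> s \<le> r"
    then have "F r \<le> F s" using mono_F by (simp add: mono_def)
    with that \<open>F s < \<theta>\<close> show False by (simp add: D_def)
  qed
  then have "bdd_below D" by (rule bdd_belowI)
  show "\<sigma> \<le> t" unfolding \<sigma>_def using \<open>t \<in> D\<close> \<open>bdd_below D\<close> by (rule cInf_lower)
  show "s \<le> \<sigma>" unfolding \<sigma>_def using \<open>t \<in> D\<close> D_ge_s by (intro cInf_greatest) auto
  show "F x < \<theta>" if "x < \<sigma>" for x
  proof (rule ccontr)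
    assume "\<not> F x < \<theta>"
    then have "\<sigma> \<le> x" unfolding \<sigma>_def using \<open>bdd_below D\<close> by (intro cInf_lower) (simp_all add: D_def)
    with that show False by simp
  qed
  have above_\<sigma>: "\<theta> \<le> F x" if "\<sigma> < x" for x
  proof -
    obtain d where "d \<in> D" "d < x"
      using cInf_lessD[of D x] \<open>\<sigma> < x\<close> \<open>t \<in> D\<close> by (auto simp: \<sigma>_def)
    then show ?thesis using mono_F by (simp add: D_def mono_def) (meson less_imp_le order_trans)
  qed
  have "\<theta> \<le> F \<sigma>"
  proof (rule tendsto_lowerbound)
    show "(F \<longlongrightarrow> F \<sigma>) (at_right \<sigma>)" using right_cont_F by (simp add: continuous_within)
    show "eventually (\<lambda>x. \<theta> \<le> F x) (at_right \<sigma>)"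
      using eventually_at_right_less by (rule eventually_mono) (rule above_\<sigma>)
  qed simp
  show "\<theta> \<le> F x" if "\<sigma> \<le> x" for x
  proof (cases "\<sigma> = x")
    case True
    then show ?thesis using \<open>\<theta> \<le> F \<sigma>\<close> by simp
  next
    case False
    then show ?thesis using above_\<sigma> that by simp
  qed
qed

lemma interval_measure_null_integral_crossing:
  fixes F g :: "real \<Rightarrow> real"
  assumes mono_F: "mono F" and right_cont_F: "\<And>x. continuous (at_right x) F"
    and null: "(\<integral>\<^sup>+ x. ennreal (g x) * indicator S x \<partial>interval_measure F) = 0"
    and "{s..t} \<subseteq> S" and "F s < \<theta>" and "\<theta> < F t" and "0 < \<delta>"
  shows "\<exists>r\<in>{s..t}. \<theta> \<le> F r \<and> g r < \<delta>"
proof (rule ccontr)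
  assume no_witness: "\<not> ?thesis"
  obtain \<sigma> where "s \<le> \<sigma>" "\<sigma> \<le> t" and below_\<sigma>: "\<And>x. x < \<sigma> \<Longrightarrow> F x < \<theta>"
    and above_\<sigma>: "\<And>x. \<sigma> \<le> x \<Longrightarrow> \<theta> \<le> F x"
    using mono_right_continuous_first_crossing[OF mono_F right_cont_F \<open>F s < \<theta>\<close>]
      \<open>\<theta> < F t\<close> by (metis less_imp_le)
  have g_large: "\<delta> \<le> g r" if "r \<in> {\<sigma>..t}" for r
    using no_witness above_\<sigma>[of r] that \<open>s \<le> \<sigma>\<close> by (metis atLeastAtMost_iff not_less order_trans)
  have "ennreal \<delta> * ennreal (F t - \<theta>) \<le> ennreal \<delta> * emeasure (interval_measure F) {\<sigma>..t}"
    using emeasure_interval_measure_Icc_ge[OF mono_F right_cont_F \<open>\<sigma> \<le> t\<close>, of \<theta>] below_\<sigma>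
    by (intro mult_left_mono) (auto simp: less_imp_le)
  also have "\<dots> = (\<integral>\<^sup>+ x. ennreal \<delta> * indicator {\<sigma>..t} x \<partial>interval_measure F)"
    by (simp add: nn_integral_cmult_indicator)
  also have "\<dots> \<le> (\<integral>\<^sup>+ x. ennreal (g x) * indicator S x \<partial>interval_measure F)"
    using g_large \<open>{s..t} \<subseteq> S\<close> \<open>s \<le> \<sigma>\<close>
    by (intro nn_integral_mono) (auto simp: indicator_def subset_iff intro: ennreal_leI)
  finally show False using null \<open>0 < \<delta>\<close> \<open>\<theta> < F t\<close> by simp
qed

lemma mono_comp_max_0:
  fixes K :: "real \<Rightarrow> real"
  assumes "mono_on {0..} K"
  shows "mono (\<lambda>x. K (max x 0))"
proof (rule monoI)
  fix x y :: real assume "x \<le> y"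
  then show "K (max x 0) \<le> K (max y 0)" by (intro mono_onD[OF assms]) auto
qed

lemma continuous_at_right_comp_max_0:
  fixes K :: "real \<Rightarrow> real"
  assumes right_cont_K: "\<And>t. 0 \<le> t \<Longrightarrow> continuous (at_right t) K"
  shows "continuous (at_right x) (\<lambda>x. K (max x 0))"
proof (cases "x < 0")
  case True
  have "eventually (\<lambda>z. K (max z 0) = K (max x 0)) (at_right x)"
    using eventually_at_right_real[OF True] by eventually_elim (use True in auto)
  then show ?thesis by (simp add: continuous_within tendsto_eventually)
next
  case False
  have "eventually (\<lambda>z. K z = K (max z 0)) (at_right x)"
    using eventually_at_right_less by eventually_elim (use False in auto)
  moreover have "(K \<longlongrightarrow> K x) (at_right x)"
    using right_cont_K False by (simp add: continuous_within)
  ultimately show ?thesis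
    using False by (simp add: continuous_within Lim_transform_eventually)
qed

lemma rlim_eqI: "(f \<longlongrightarrow> L) (at_right t) \<Longrightarrow> rlim f t = L"
  unfolding rlim_def by (rule tendsto_Lim) simp

lemma regulated_tendsto_rlim:
  assumes "regulated f" and "0 \<le> t"
  shows "(f \<longlongrightarrow> rlim f t) (at_right t)"
proof -
  obtain L where "(f \<longlongrightarrow> L) (at_right t)"
    using assms unfolding regulated_def by blast
  then show ?thesis by (simp add: rlim_eqI)
qed

lemma RP_sol_rlim:
  assumes RP: "RP_sol l y xi kappa" and "regulated y" and "regulated l" and "0 \<le> t"
  shows "rlim xi t = rlim y t + kappa t" and "rlim l t \<le> rlim xi t"
proof -
  have xi_eq: "xi x = y x + kappa x" and l_le_xi: "l x \<le> xi x" if "0 \<le> x" for x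
    using RP that unfolding RP_sol_def by blast+
  have eventually_nonneg: "eventually (\<lambda>x. 0 \<le> x) (at_right t)"
    using eventually_at_right_less by eventually_elim (use \<open>0 \<le> t\<close> in auto)
  have "(kappa \<longlongrightarrow> kappa t) (at_right t)"
    using RP \<open>0 \<le> t\<close> by (simp add: RP_sol_def continuous_within)
  then have "((\<lambda>x. y x + kappa x) \<longlongrightarrow> rlim y t + kappa t) (at_right t)"
    using regulated_tendsto_rlim[OF \<open>regulated y\<close> \<open>0 \<le> t\<close>] by (intro tendsto_add)
  moreover have "eventually (\<lambda>x. y x + kappa x = xi x) (at_right t)"
    using eventually_nonneg by eventually_elim (simp add: xi_eq)
  ultimately have xi_lim: "(xi \<longlongrightarrow> rlim y t + kappa t) (at_right t)"
    by (rule Lim_transform_eventually)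
  then show "rlim xi t = rlim y t + kappa t" by (rule rlim_eqI)
  have "eventually (\<lambda>x. l x \<le> xi x) (at_right t)"
    using eventually_nonneg by eventually_elim (rule l_le_xi)
  with regulated_tendsto_rlim[OF \<open>regulated l\<close> \<open>0 \<le> t\<close>] xi_lim
  show "rlim l t \<le> rlim xi t"
    by (simp add: \<open>rlim xi t = _\<close> tendsto_le[OF trivial_limit_at_right_real])
qed

text \<open>A quantitative form of "the measure dK on [0, t] is carried by the zeros of g".\<close>

definition grows_only_near_zeros :: "(real \<Rightarrow> real) \<Rightarrow> (real \<Rightarrow> real) \<Rightarrow> real \<Rightarrow> bool" where
  "grows_only_near_zeros K g t \<longleftrightarrow>
     (\<forall>s\<in>{0..t}. \<forall>e>0. \<forall>\<delta>>0. \<exists>r\<in>{s..t}. K t - e \<le> K r \<and> (r = s \<or> g r < \<delta>))"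

lemma grows_only_near_zerosD:
  assumes "grows_only_near_zeros K g t" and "s \<in> {0..t}" and "0 < e" and "0 < \<delta>"
  obtains r where "r \<in> {s..t}" and "K t - e \<le> K r" and "r = s \<or> g r < \<delta>"
  using assms unfolding grows_only_near_zeros_def by blast

lemma grows_only_near_zeros_cong:
  assumes "\<And>r. r \<in> {0..t} \<Longrightarrow> g r = g' r"
  shows "grows_only_near_zeros K g t \<longleftrightarrow> grows_only_near_zeros K g' t"
proof -
  have "(\<exists>r\<in>{s..t}. P r \<and> (r = s \<or> g r < \<delta>)) \<longleftrightarrow> (\<exists>r\<in>{s..t}. P r \<and> (r = s \<or> g' r < \<delta>))"
    if "s \<in> {0..t}" for s P \<delta>
    using assms that by (intro bex_cong refl) auto
  then show ?thesis unfolding grows_only_near_zeros_def by simp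
qed

lemma RP_sol_grows_only_near_zeros:
  assumes RP: "RP_sol l y xi kappa"
  shows "grows_only_near_zeros kappa (\<lambda>r. min (xi r - l r) (rlim xi r - rlim l r)) t"
  unfolding grows_only_near_zeros_def
proof (intro ballI allI impI)
  fix s e \<delta> :: real assume "s \<in> {0..t}" "0 < e" "0 < \<delta>"
  then have "0 \<le> s" "s \<le> t" by auto
  show "\<exists>r\<in>{s..t}. kappa t - e \<le> kappa r \<and> (r = s \<or> min (xi r - l r) (rlim xi r - rlim l r) < \<delta>)"
  proof (cases "kappa t - e \<le> kappa s")
    case True
    then show ?thesis using \<open>s \<le> t\<close> by auto
  next
    case False
    have "\<exists>r\<in>{s..t}. kappa t - e \<le> kappa (max r 0) \<and> min (xi r - l r) (rlim xi r - rlim l r) < \<delta>"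
    proof (rule interval_measure_null_integral_crossing[where S = "{0..}"])
      show "mono (\<lambda>x. kappa (max x 0))"
        using RP by (intro mono_comp_max_0) (simp add: RP_sol_def)
      show "continuous (at_right x) (\<lambda>x. kappa (max x 0))" for x
        using RP by (intro continuous_at_right_comp_max_0) (simp add: RP_sol_def)
      show "(\<integral>\<^sup>+ x. ennreal (min (xi x - l x) (rlim xi x - rlim l x)) * indicator {0..} x
          \<partial>interval_measure (\<lambda>x. kappa (max x 0))) = 0"
        using RP by (simp add: RP_sol_def)
      show "{s..t} \<subseteq> {0..}" using \<open>0 \<le> s\<close> by auto
      show "kappa (max s 0) < kappa t - e" using False \<open>0 \<le> s\<close> by (simp add: max_absorb1)
      show "kappa t - e < kappa (max t 0)" using \<open>0 < e\<close> \<open>0 \<le> s\<close> \<open>s \<le> t\<close> by (simp add: max_absorb1)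
    qed fact
    then obtain r where "r \<in> {s..t}" "kappa t - e \<le> kappa (max r 0)"
      "min (xi r - l r) (rlim xi r - rlim l r) < \<delta>" by blast
    moreover have "max r 0 = r" using \<open>r \<in> {s..t}\<close> \<open>0 \<le> s\<close> by simp
    ultimately show ?thesis by auto
  qed
qed

lemma RP_sol_contact_eq:
  assumes RP: "RP_sol l y xi kappa" and "regulated y" and "regulated l" and "0 \<le> r"
  shows "min (xi r - l r) (rlim xi r - rlim l r) = min (y r - l r) (rlim y r - rlim l r) + kappa r"
  using RP_sol_rlim(1)[OF assms] RP \<open>0 \<le> r\<close> by (simp add: RP_sol_def)

lemma RP_sol_contact_nonneg:
  assumes RP: "RP_sol l y xi kappa" and "regulated y" and "regulated l" and "0 \<le> r"
  shows "0 \<le> min (y r - l r) (rlim y r - rlim l r) + kappa r"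
proof -
  have "l r \<le> xi r" using RP \<open>0 \<le> r\<close> unfolding RP_sol_def by blast
  then show ?thesis using RP_sol_contact_eq[OF assms] RP_sol_rlim(2)[OF assms] by linarith
qed

lemma RP_sol_grows_only_near_contact:
  assumes RP: "RP_sol l y xi kappa" and "regulated y" and "regulated l"
  shows "grows_only_near_zeros kappa (\<lambda>r. min (y r - l r) (rlim y r - rlim l r) + kappa r) t"
proof -
  have "grows_only_near_zeros kappa (\<lambda>r. min (y r - l r) (rlim y r - rlim l r) + kappa r) t
      \<longleftrightarrow> grows_only_near_zeros kappa (\<lambda>r. min (xi r - l r) (rlim xi r - rlim l r)) t"
    using RP_sol_contact_eq[OF assms] by (intro grows_only_near_zeros_cong) simp
  with RP_sol_grows_only_near_zeros[OF RP] show ?thesis by simp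
qed

lemma INF_min_zero_eq_uminus:
  fixes c K :: "real \<Rightarrow> real"
  assumes "0 \<le> t" and mono_K: "mono_on {0..t} K" and "K 0 = 0"
    and nonneg: "\<And>r. r \<in> {0..t} \<Longrightarrow> 0 \<le> c r + K r"
    and grows: "grows_only_near_zeros K (\<lambda>r. c r + K r) t"
  shows "(INF s\<in>{0..t}. min (c s) 0) = - K t"
proof (rule antisym)
  have lower: "- K t \<le> min (c s) 0" if "s \<in> {0..t}" for s
    using nonneg[OF that] mono_onD[OF mono_K, of s t] mono_onD[OF mono_K, of 0 t] that \<open>K 0 = 0\<close>
    by auto
  then show "- K t \<le> (INF s\<in>{0..t}. min (c s) 0)"
    using \<open>0 \<le> t\<close> by (intro cINF_greatest) auto
  have bdd: "bdd_below ((\<lambda>s. min (c s) 0) ` {0..t})"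
    using lower by (rule bdd_belowI2)
  show "(INF s\<in>{0..t}. min (c s) 0) \<le> - K t"
  proof (rule field_le_epsilon)
    fix e :: real assume "0 < e"
    obtain r where r: "r \<in> {0..t}" "K t - e / 2 \<le> K r" "r = 0 \<or> c r + K r < e / 2"
      using grows_only_near_zerosD[OF grows, of 0 "e / 2" "e / 2"] \<open>0 \<le> t\<close> \<open>0 < e\<close> by auto
    have "min (c r) 0 \<le> - K t + e"
      using r(3)
    proof
      assume "r = 0"
      then show ?thesis using r(2) \<open>K 0 = 0\<close> \<open>0 < e\<close> by (simp add: min_le_iff_disj)
    next
      assume "c r + K r < e / 2"
      then show ?thesis using r(2) by linarith
    qed
    then show "(INF s\<in>{0..t}. min (c s) 0) \<le> - K t + e"
      using cINF_lower[OF bdd r(1)] by linarith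
  qed
qed

definition sup_inf :: "(real \<Rightarrow> real) \<Rightarrow> (real \<Rightarrow> real) \<Rightarrow> real \<Rightarrow> real" where
  "sup_inf b a t = (SUP s\<in>{0..t}. min (b s) (INF r\<in>{s..t}. a r))"

lemma sup_inf_cong:
  assumes "\<And>s. s \<in> {0..t} \<Longrightarrow> b s = b' s" and "\<And>r. r \<in> {0..t} \<Longrightarrow> a r = a' r"
  shows "sup_inf b a t = sup_inf b' a' t"
  unfolding sup_inf_def using assms by (intro SUP_cong arg_cong2[where f = min] INF_cong) auto

lemma sup_inf_upper:
  assumes "s \<in> {0..t}" and bdd: "\<And>s. s \<in> {0..t} \<Longrightarrow> bdd_below (a ` {s..t})"
  shows "min (b s) (INF r\<in>{s..t}. a r) \<le> sup_inf b a t"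
proof -
  have "min (b s) (INF r\<in>{s..t}. a r) \<le> a t" if "s \<in> {0..t}" for s
    using cINF_lower[OF bdd[OF that], of t] that by auto
  then have "bdd_above ((\<lambda>s. min (b s) (INF r\<in>{s..t}. a r)) ` {0..t})"
    by (rule bdd_aboveI2)
  then show ?thesis unfolding sup_inf_def using \<open>s \<in> {0..t}\<close> by (rule cSUP_upper2) simp
qed

lemma sup_inf_least:
  assumes "0 \<le> t" and "\<And>s. s \<in> {0..t} \<Longrightarrow> min (b s) (INF r\<in>{s..t}. a r) \<le> M"
  shows "sup_inf b a t \<le> M"
  unfolding sup_inf_def using assms by (intro cSUP_least) auto

lemma INF_plus_mono_bounds:
  fixes a K :: "real \<Rightarrow> real"
  assumes "s \<le> t" and mono_K: "mono_on {s..t} K" and bdd: "bdd_below (a ` {s..t})"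
  shows "(INF r\<in>{s..t}. a r) + K s \<le> (INF r\<in>{s..t}. a r + K r)"
    and "(INF r\<in>{s..t}. a r + K r) \<le> (INF r\<in>{s..t}. a r) + K t"
proof -
  have lower: "(INF r\<in>{s..t}. a r) + K s \<le> a r + K r" if "r \<in> {s..t}" for r
    using cINF_lower[OF bdd that] mono_onD[OF mono_K, of s r] that by auto
  then show "(INF r\<in>{s..t}. a r) + K s \<le> (INF r\<in>{s..t}. a r + K r)"
    using \<open>s \<le> t\<close> by (intro cINF_greatest) auto
  have "bdd_below ((\<lambda>r. a r + K r) ` {s..t})" using lower by (rule bdd_belowI2)
  then have "(INF r\<in>{s..t}. a r + K r) - K t \<le> a r" if "r \<in> {s..t}" for r
    using cINF_lower[OF _ that] mono_onD[OF mono_K, of r t] that by fastforce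
  then have "(INF r\<in>{s..t}. a r + K r) - K t \<le> (INF r\<in>{s..t}. a r)"
    using \<open>s \<le> t\<close> by (intro cINF_greatest) auto
  then show "(INF r\<in>{s..t}. a r + K r) \<le> (INF r\<in>{s..t}. a r) + K t" by simp
qed

lemma bdd_below_if_shift_nonneg:
  fixes a K :: "real \<Rightarrow> real"
  assumes mono_K: "mono_on {0..t} K" and nonneg: "\<And>r. r \<in> {0..t} \<Longrightarrow> 0 \<le> a r + K r"
    and "s \<in> {0..t}"
  shows "bdd_below (a ` {s..t})"
proof (rule bdd_belowI2)
  fix r assume "r \<in> {s..t}"
  then show "- K t \<le> a r"
    using nonneg[of r] mono_onD[OF mono_K, of r t] \<open>s \<in> {0..t}\<close> by auto
qed

lemma sup_inf_shift_nonneg: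
  fixes a b K :: "real \<Rightarrow> real"
  assumes "0 \<le> t" and mono_K: "mono_on {0..t} K"
    and nonneg: "\<And>r. r \<in> {0..t} \<Longrightarrow> 0 \<le> a r + K r"
  shows "0 \<le> sup_inf (\<lambda>s. max (b s + K s) 0) (\<lambda>r. a r + K r) t"
proof -
  have "t \<in> {0..t}" using \<open>0 \<le> t\<close> by simp
  then have "min (max (b t + K t) 0) (INF r\<in>{t..t}. a r + K r)
      \<le> sup_inf (\<lambda>s. max (b s + K s) 0) (\<lambda>r. a r + K r) t"
    by (rule sup_inf_upper) (use nonneg in \<open>auto intro: bdd_belowI2[where m = 0]\<close>)
  then show ?thesis using nonneg[OF \<open>t \<in> {0..t}\<close>] by simp
qed

lemma sup_inf_shift_le:
  fixes a b K :: "real \<Rightarrow> real"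
  assumes "0 \<le> t" and mono_K: "mono_on {0..t} K"
    and nonneg: "\<And>r. r \<in> {0..t} \<Longrightarrow> 0 \<le> a r + K r"
  shows "sup_inf (\<lambda>s. max (b s + K s) 0) (\<lambda>r. a r + K r) t \<le> max 0 (sup_inf b a t + K t)"
proof (rule sup_inf_least[OF \<open>0 \<le> t\<close>])
  fix s assume s: "s \<in> {0..t}"
  have bdd: "bdd_below (a ` {s..t})" if "s \<in> {0..t}" for s
    using mono_K nonneg that by (rule bdd_below_if_shift_nonneg)
  have "(INF r\<in>{s..t}. a r + K r) \<le> (INF r\<in>{s..t}. a r) + K t"
    using s bdd[OF s] mono_on_subset[OF mono_K] by (intro INF_plus_mono_bounds(2)) auto
  moreover have "K s \<le> K t" using mono_onD[OF mono_K] s by auto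
  moreover have "min (b s) (INF r\<in>{s..t}. a r) \<le> sup_inf b a t"
    using s bdd by (rule sup_inf_upper)
  ultimately show "min (max (b s + K s) 0) (INF r\<in>{s..t}. a r + K r) \<le> max 0 (sup_inf b a t + K t)"
    by linarith
qed

lemma sup_inf_shift_ge:
  fixes a b c K :: "real \<Rightarrow> real"
  assumes "0 \<le> t" and mono_K: "mono_on {0..t} K"
    and nonneg: "\<And>r. r \<in> {0..t} \<Longrightarrow> 0 \<le> a r + K r"
    and a_le: "\<And>r. r \<in> {0..t} \<Longrightarrow> a r \<le> max (c r) (b r)"
    and grows: "grows_only_near_zeros K (\<lambda>r. c r + K r) t"
  shows "sup_inf b a t + K t \<le> sup_inf (\<lambda>s. max (b s + K s) 0) (\<lambda>r. a r + K r) t"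
    (is "_ \<le> ?\<Theta>")
proof -
  have bdd: "bdd_below (a ` {s..t})" if "s \<in> {0..t}" for s
    using mono_K nonneg that by (rule bdd_below_if_shift_nonneg)
  have term_le: "min (b s) (INF r\<in>{s..t}. a r) + K t \<le> ?\<Theta>" if s: "s \<in> {0..t}" for s
  proof (rule field_le_epsilon)
    fix e :: real assume "0 < e"
    define m where "m = min (b s) (INF r\<in>{s..t}. a r) + K t"
    show "m \<le> ?\<Theta> + e"
    proof (cases "m \<le> e")
      case True
      moreover have "0 \<le> ?\<Theta>" using \<open>0 \<le> t\<close> mono_K nonneg by (rule sup_inf_shift_nonneg)
      ultimately show ?thesis by linarith
    next
      case False
      obtain r where r: "r \<in> {s..t}" "K t - e \<le> K r" "r = s \<or> c r + K r < m - e"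
        using grows_only_near_zerosD[OF grows s \<open>0 < e\<close>, of "m - e"] False by auto
      have "r \<in> {0..t}" using r(1) s by auto
      have "m - K t \<le> a r"
        using cINF_lower[OF bdd[OF s] r(1)] by (simp add: m_def)
      then have "m - K t \<le> b r"
        using r(2,3) a_le[OF \<open>r \<in> {0..t}\<close>] by (auto simp: m_def)
      moreover have "(INF r\<in>{s..t}. a r) \<le> (INF r'\<in>{r..t}. a r')"
        using r(1) bdd[OF s] by (intro cINF_superset_mono) auto
      moreover have "(INF r'\<in>{r..t}. a r') + K r \<le> (INF r'\<in>{r..t}. a r' + K r')"
        using r(1) s bdd[OF \<open>r \<in> {0..t}\<close>] mono_on_subset[OF mono_K]
        by (intro INF_plus_mono_bounds(1)) auto
      ultimately have "m - e \<le> min (max (b r + K r) 0) (INF r'\<in>{r..t}. a r' + K r')"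
        using r(2) unfolding m_def by linarith
      also have "\<dots> \<le> ?\<Theta>"
        using \<open>r \<in> {0..t}\<close> by (rule sup_inf_upper) (use nonneg in \<open>auto intro: bdd_belowI2[where m = 0]\<close>)
      finally show ?thesis by linarith
    qed
  qed
  have "sup_inf b a t \<le> ?\<Theta> - K t"
  proof (rule sup_inf_least[OF \<open>0 \<le> t\<close>])
    fix s assume "s \<in> {0..t}"
    then show "min (b s) (INF r\<in>{s..t}. a r) \<le> ?\<Theta> - K t" using term_le[of s] by linarith
  qed
  then show ?thesis by simp
qed

lemma sup_inf_shift_eq:
  fixes a b c K :: "real \<Rightarrow> real"
  assumes "0 \<le> t" and "mono_on {0..t} K"
    and "\<And>r. r \<in> {0..t} \<Longrightarrow> 0 \<le> a r + K r"
    and "\<And>r. r \<in> {0..t} \<Longrightarrow> a r \<le> max (c r) (b r)"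
    and "grows_only_near_zeros K (\<lambda>r. c r + K r) t"
  shows "sup_inf (\<lambda>s. max (b s + K s) 0) (\<lambda>r. a r + K r) t = max 0 (sup_inf b a t + K t)"
proof (rule antisym)
  show "sup_inf (\<lambda>s. max (b s + K s) 0) (\<lambda>r. a r + K r) t \<le> max 0 (sup_inf b a t + K t)"
    using assms(1-3) by (rule sup_inf_shift_le)
  show "max 0 (sup_inf b a t + K t) \<le> sup_inf (\<lambda>s. max (b s + K s) 0) (\<lambda>r. a r + K r) t"
  proof (rule max.boundedI)
    show "0 \<le> sup_inf (\<lambda>s. max (b s + K s) 0) (\<lambda>r. a r + K r) t"
      using assms(1-3) by (rule sup_inf_shift_nonneg)
    show "sup_inf b a t + K t \<le> sup_inf (\<lambda>s. max (b s + K s) 0) (\<lambda>r. a r + K r) t"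
      using assms by (rule sup_inf_shift_ge)
  qed
qed

lemma RP_sol_Theta_eq:
  assumes RP: "RP_sol l y xi kappa" and "regulated y" and "regulated l"
  shows "Theta u l xi t = sup_inf
    (\<lambda>s. max (max (y s - u s) (rlim y s - rlim u s) + kappa s) 0)
    (\<lambda>r. max (min (y r - l r) (rlim y r - rlim l r)) (y r - u r) + kappa r) t"
  unfolding Theta_def sup_inf_def[symmetric]
proof (rule sup_inf_cong)
  fix r :: real assume "r \<in> {0..t}"
  then have "0 \<le> r" by simp
  have xi_eq: "xi r = y r + kappa r" using RP \<open>0 \<le> r\<close> unfolding RP_sol_def by blast
  show "max (max (xi r - u r) (rlim xi r - rlim u r)) 0
      = max (max (y r - u r) (rlim y r - rlim u r) + kappa r) 0"
    using RP_sol_rlim(1)[OF assms \<open>0 \<le> r\<close>] by (simp add: xi_eq max_add_distrib_left algebra_simps)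
  show "max (min (xi r - l r) (rlim xi r - rlim l r)) (xi r - u r)
      = max (min (y r - l r) (rlim y r - rlim l r)) (y r - u r) + kappa r"
    using RP_sol_contact_eq[OF assms \<open>0 \<le> r\<close>] by (simp add: xi_eq max_add_distrib_left)
qed

theorem lemma3:
  fixes y l u xi kappa :: "real \<Rightarrow> real"
  assumes "regulated y" and "regulated l" and "regulated u"
    and "\<forall>t\<ge>0. l t \<le> u t"
    and "l 0 \<le> y 0" and "y 0 \<le> u 0"
    and "RP_sol l y xi kappa"
    and "t \<ge> 0"
  shows "max (alpha l y t) (beta u l y t) = alpha l y t + Theta u l xi t"
proof -
  note RP = \<open>RP_sol l y xi kappa\<close>
  let ?c = "\<lambda>r. min (y r - l r) (rlim y r - rlim l r)"
  let ?a = "\<lambda>r. max (?c r) (y r - u r)"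
  let ?b = "\<lambda>r. max (y r - u r) (rlim y r - rlim u r)"
  have mono_K: "mono_on {0..t} kappa"
    using RP by (auto simp: RP_sol_def intro: mono_on_subset)
  have nonneg: "0 \<le> ?c r + kappa r" if "r \<in> {0..t}" for r
    using RP_sol_contact_nonneg[OF RP assms(1,2)] that by simp
  have grows: "grows_only_near_zeros kappa (\<lambda>r. ?c r + kappa r) t"
    using RP assms(1,2) by (rule RP_sol_grows_only_near_contact)
  have "alpha l y t = - kappa t"
    unfolding alpha_def
  proof (rule INF_min_zero_eq_uminus)
    show "kappa 0 = 0" using RP by (simp add: RP_sol_def)
  qed (use \<open>0 \<le> t\<close> mono_K nonneg grows in auto)
  moreover have "Theta u l xi t = sup_inf (\<lambda>s. max (?b s + kappa s) 0) (\<lambda>r. ?a r + kappa r) t"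
    using RP assms(1,2) by (rule RP_sol_Theta_eq)
  moreover have "\<dots> = max 0 (beta u l y t + kappa t)"
    unfolding beta_def sup_inf_def[symmetric] using \<open>0 \<le> t\<close> mono_K
  proof (rule sup_inf_shift_eq[where c = ?c])
    show "0 \<le> ?a r + kappa r" if "r \<in> {0..t}" for r using nonneg[OF that] by linarith
    show "?a r \<le> max (?c r) (?b r)" for r by linarith
  qed (fact grows)
  ultimately show ?thesis by linarith
qed

end
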